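(* Suppose $U\in\mathbf{M}_{2N}(\mathbb{C})$ is a partial isometry with $U^{*}=U^{\sharp}$. Then there is a symplectic unitary $W\in\mathbf{M}_{2N}(\mathbb{C})$ such that $W\xi=U\xi$ for all $\xi\perp\ker(U)$.
   Context: A partial isometry is $U$ with $UU^*U=U$. For $X\in\mathbf{M}_{2N}(\mathbb{C})$ in $N\times N$ blocks $X=\begin{bmatrix}A&B\\C&D\end{bmatrix}$, $X^{\sharp}=\begin{bmatrix}D^{\mathrm T}&-B^{\mathrm T}\\-C^{\mathrm T}&A^{\mathrm T}\end{bmatrix}$, equivalently $X^\sharp=-ZX^{\mathrm T}Z$ with $Z=\begin{bmatrix}0&I\\-I&0\end{bmatrix}$. A symplectic unitary is a unitary $W\in\mathbf{M}_{2N}(\mathbb{C})$ with $W^{\mathrm T}ZW=Z$. *)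

theory Defs
  imports "HOL-Analysis.Analysis"
begin

text \<open>Matrices in M_{2N}(C) are indexed by the type 'n + 'n (so 2N = 2 * CARD('n)):
  Inl i is the i-th index of the first block, Inr i of the second block.\<close>

type_synonym 'n cmat2 = "complex ^ ('n + 'n) ^ ('n + 'n)"
type_synonym 'n cvec2 = "complex ^ ('n + 'n)"

definition adjointM :: "complex ^ 'm ^ 'k \<Rightarrow> complex ^ 'k ^ 'm" where
  "adjointM X = (\<chi> i j. cnj (X $ j $ i))"

definition cinner :: "complex ^ 'm \<Rightarrow> complex ^ 'm \<Rightarrow> complex" where
  "cinner x y = (\<Sum>i\<in>UNIV. cnj (x $ i) * y $ i)"

definition partial_isometry :: "complex ^ 'm ^ 'm \<Rightarrow> bool" where
  "partial_isometry U \<longleftrightarrow> U ** adjointM U ** U = U"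

definition unitaryM :: "complex ^ 'm ^ 'm \<Rightarrow> bool" where
  "unitaryM W \<longleftrightarrow> adjointM W ** W = mat 1 \<and> W ** adjointM W = mat 1"

definition Zmat :: "'n::finite cmat2" where
  "Zmat = (\<chi> a b. case (a, b) of
      (Inl i, Inr j) \<Rightarrow> (if i = j then 1 else 0)
    | (Inr i, Inl j) \<Rightarrow> (if i = j then -1 else 0)
    | _ \<Rightarrow> 0)"

text \<open>X# = [[D^T, -B^T], [-C^T, A^T]] for X = [[A, B], [C, D]].\<close>
definition sharp :: "'n::finite cmat2 \<Rightarrow> 'n cmat2" where
  "sharp X = (\<chi> a b. case (a, b) of
      (Inl i, Inl j) \<Rightarrow> X $ Inr j $ Inr i
    | (Inl i, Inr j) \<Rightarrow> - X $ Inl j $ Inr i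
    | (Inr i, Inl j) \<Rightarrow> - X $ Inr j $ Inl i
    | (Inr i, Inr j) \<Rightarrow> X $ Inl j $ Inl i)"

definition symplectic_unitary :: "'n::finite cmat2 \<Rightarrow> bool" where
  "symplectic_unitary W \<longleftrightarrow> unitaryM W \<and> transpose W ** Zmat ** W = Zmat"

end

theory Submission
  imports Defs
begin

text \<open>Let J be the antiunitary J x = Z (conj x); it intertwines adjoint and sharp,
  X# J = J X*. If the partial isometry U (with U* = U#) is not unitary, pick unit vectors
  e in ker U and f in ker U*. The symmetry forces J e in ker U and J f in ker U*, and always
  e \<perp> J e and f \<perp> J f. Hence U' = U + f e* + (J f)(J e)* is again a partial isometry with
  U'* = U'#, it agrees with U on the orthogonal complement of ker U, its kernel lies in ker U,
  and the trace of its initial projection U'* U' is larger by 2. As that trace is bounded by 2N,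
  finitely many such steps reach a unitary W with W* = W#, and such a W is symplectic:
  W^T Z W = Z W# W = Z W* W = Z.\<close>

lemma sum_UNIV_Plus:
  "sum f (UNIV :: ('a::finite + 'b::finite) set) = (\<Sum>i\<in>UNIV. f (Inl i)) + (\<Sum>i\<in>UNIV. f (Inr i))"
  by (subst UNIV_Plus_UNIV [symmetric], subst sum.Plus) auto

lemma matrix_add_rdistrib: "(B + C) ** A = B ** A + C ** A"
  by (vector matrix_matrix_mult_def sum.distrib [symmetric] field_simps)

lemma adjointM_adjointM [simp]: "adjointM (adjointM X) = X"
  by (simp add: adjointM_def vec_eq_iff)

lemma adjointM_add [simp]: "adjointM (A + B) = adjointM A + adjointM B"
  by (simp add: adjointM_def vec_eq_iff)

lemma adjointM_mult: "adjointM (A ** B) = adjointM B ** adjointM A"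
  by (simp add: adjointM_def vec_eq_iff matrix_matrix_mult_def mult.commute)

lemma cinner_add_right [simp]: "cinner x (y + z) = cinner x y + cinner x z"
  by (simp add: cinner_def distrib_left sum.distrib)

lemma cinner_scale_right [simp]: "cinner x (c *s y) = c * cinner x y"
  by (simp add: cinner_def sum_distrib_left mult_ac)

lemma cinner_scale_left [simp]: "cinner (c *s x) y = cnj c * cinner x y"
  by (simp add: cinner_def sum_distrib_left mult_ac)

lemma cinner_zero_left [simp]: "cinner 0 y = 0"
  and cinner_zero_right [simp]: "cinner y 0 = 0"
  by (simp_all add: cinner_def)

lemma cinner_mulv_right: "cinner x (A *v y) = cinner (adjointM A *v x) y"
  by (simp add: cinner_def adjointM_def matrix_vector_mult_def sum_distrib_left
      sum_distrib_right mult_ac) (rule sum.swap)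

lemma cinner_self_eq_norm: "cinner x x = of_real ((norm x)\<^sup>2)"
proof -
  have "cinner x x = (\<Sum>i\<in>UNIV. of_real ((cmod (x $ i))\<^sup>2))"
    unfolding cinner_def by (rule sum.cong) (simp_all only: complex_norm_square mult.commute)
  also have "\<dots> = of_real ((norm x)\<^sup>2)"
    by (simp add: norm_vec_def L2_set_def sum_nonneg)
  finally show ?thesis .
qed

lemma exists_unit_vector_in_kernel:
  assumes "A *v v = 0" and "v \<noteq> 0"
  obtains e where "A *v e = 0" and "cinner e e = 1"
proof
  define c where "c = complex_of_real (1 / norm v)"
  show "A *v (c *s v) = 0"
    by (simp add: vector_scalar_commute assms(1))
  have "norm v \<noteq> 0"
    using assms(2) by simp
  have "cinner (c *s v) (c *s v) = cnj c * c * cinner v v"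
    by simp
  then show "cinner (c *s v) (c *s v) = 1"
    using \<open>norm v \<noteq> 0\<close> by (simp add: c_def cinner_self_eq_norm power2_eq_square)
qed

definition outer :: "complex ^ 'm \<Rightarrow> complex ^ 'k \<Rightarrow> complex ^ 'k ^ 'm" where
  "outer a b = (\<chi> i j. a $ i * cnj (b $ j))"

lemma outer_zero [simp]: "outer 0 b = 0" "outer a 0 = 0"
  by (simp_all add: outer_def vec_eq_iff)

lemma outer_neg_neg [simp]: "outer (- a) (- b) = outer a b"
  by (simp add: outer_def vec_eq_iff)

lemma adjointM_outer [simp]: "adjointM (outer a b) = outer b a"
  by (simp add: adjointM_def vec_eq_iff outer_def mult.commute)

lemma outer_mulv: "outer a b *v x = cinner b x *s a"
  by (simp add: outer_def cinner_def matrix_vector_mult_def vec_eq_iff sum_distrib_left mult_ac)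

lemma matrix_mult_outer: "A ** outer a b = outer (A *v a) b"
  by (simp add: outer_def matrix_vector_mult_def matrix_matrix_mult_def vec_eq_iff
      sum_distrib_left sum_distrib_right mult_ac)

lemma outer_matrix_mult: "outer a b ** A = outer a (adjointM A *v b)"
  by (simp add: outer_def adjointM_def matrix_vector_mult_def matrix_matrix_mult_def vec_eq_iff
      sum_distrib_left mult_ac)

lemma outer_mult_outer: "outer a b ** outer c d = outer (cinner b c *s a) d"
  by (simp add: outer_def cinner_def matrix_matrix_mult_def vec_eq_iff sum_distrib_left
      sum_distrib_right mult_ac)

lemma trace_outer [simp]: "trace (outer a b) = cinner b a"
  by (simp add: trace_def outer_def cinner_def mult.commute)

definition Jconj :: "'n::finite cvec2 \<Rightarrow> 'n cvec2" where
  "Jconj v = (\<chi> a. case a of Inl i \<Rightarrow> cnj (v $ Inr i) | Inr i \<Rightarrow> - cnj (v $ Inl i))"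

lemma Jconj_zero [simp]: "Jconj 0 = 0"
  by (simp add: Jconj_def vec_eq_iff split: sum.split)

lemma Jconj_Jconj [simp]: "Jconj (Jconj x) = - x"
  by (simp add: Jconj_def vec_eq_iff split: sum.split)

lemma cinner_Jconj_Jconj: "cinner (Jconj x) (Jconj y) = cinner y x"
  by (simp add: Jconj_def cinner_def sum_UNIV_Plus sum.distrib mult.commute)

lemma cinner_Jconj_self: "cinner x (Jconj x) = 0" "cinner (Jconj x) x = 0"
  by (simp_all add: Jconj_def cinner_def sum_UNIV_Plus sum.distrib mult_ac sum_negf)

lemma sharp_add [simp]: "sharp (A + B) = sharp A + sharp B"
  by (simp add: sharp_def vec_eq_iff split: sum.split)

lemma adjointM_sharp: "adjointM (sharp X) = sharp (adjointM X)"
  by (simp add: sharp_def adjointM_def vec_eq_iff split: sum.split)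

lemma sharp_outer: "sharp (outer a b) = outer (Jconj b) (Jconj a)"
  by (simp add: sharp_def outer_def Jconj_def vec_eq_iff mult.commute split: sum.split)

lemma sharp_mulv_Jconj: "sharp X *v Jconj x = Jconj (adjointM X *v x)"
  by (simp add: sharp_def adjointM_def Jconj_def matrix_vector_mult_def vec_eq_iff sum_UNIV_Plus
      sum_negf split: sum.split)

lemma Zmat_mult_sharp: "Zmat ** sharp X = transpose X ** Zmat"
  unfolding vec_eq_iff
proof (intro allI)
  fix i j :: "'a + 'a"
  show "(Zmat ** sharp X) $ i $ j = (transpose X ** Zmat) $ i $ j"
    by (cases i; cases j) (simp_all add: sharp_def Zmat_def transpose_def matrix_matrix_mult_def
        sum_UNIV_Plus if_distrib if_distribR sum.delta sum.delta' cong: if_cong)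
qed

lemma sharp_unitary_imp_symplectic_unitary:
  assumes sh: "adjointM W = sharp W" and unitary: "adjointM W ** W = mat 1"
  shows "symplectic_unitary W"
proof -
  have "transpose W ** Zmat ** W = Zmat ** (adjointM W ** W)"
    by (simp add: Zmat_mult_sharp [symmetric] sh matrix_mul_assoc)
  moreover have "W ** adjointM W = mat 1"
    using unitary matrix_left_right_inverse by blast
  ultimately show ?thesis
    using unitary by (simp add: symplectic_unitary_def unitaryM_def)
qed

lemma partial_isometry_adjointM:
  assumes "partial_isometry U"
  shows "partial_isometry (adjointM U)"
  using assms unfolding partial_isometry_def by (metis adjointM_mult adjointM_adjointM matrix_mul_assoc)

lemma partial_isometry_kernel_unit_vector:
  assumes pi: "partial_isometry U" and "adjointM U ** U \<noteq> mat 1"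
  obtains e where "U *v e = 0" and "cinner e e = 1"
proof -
  obtain x where x: "(adjointM U ** U) *v x \<noteq> x"
    using assms(2) matrix_eq by (metis matrix_vector_mul_lid)
  have "U *v (x - (adjointM U ** U) *v x) = 0"
    using pi by (simp add: partial_isometry_def matrix_vector_mult_diff_distrib
        matrix_vector_mul_assoc matrix_mul_assoc)
  moreover have "x - (adjointM U ** U) *v x \<noteq> 0"
    using x by simp
  ultimately show thesis
    using exists_unit_vector_in_kernel that by blast
qed

lemma hermitian_idempotent_diag:
  fixes P :: "complex ^ 'm ^ 'm"
  assumes herm: "adjointM P = P" and idem: "P ** P = P"
  shows "P $ i $ i = of_real ((norm (P $ i))\<^sup>2)"
proof -
  have "P $ k $ i = cnj (P $ i $ k)" for k
    using arg_cong [OF herm, of "\<lambda>M. M $ k $ i"] by (simp add: adjointM_def)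
  then have "(P ** P) $ i $ i = cinner (P $ i) (P $ i)"
    by (simp add: matrix_matrix_mult_def cinner_def mult.commute)
  then show ?thesis
    using idem by (simp add: cinner_self_eq_norm)
qed

lemma hermitian_idempotent_diag_le_1:
  fixes P :: "complex ^ 'm ^ 'm"
  assumes "adjointM P = P" and "P ** P = P"
  shows "Re (P $ i $ i) \<le> 1"
proof -
  define r where "r = norm (P $ i)"
  have diag: "P $ i $ i = of_real (r\<^sup>2)"
    unfolding r_def using assms by (rule hermitian_idempotent_diag)
  have "r\<^sup>2 \<le> r"
    using Finite_Cartesian_Product.norm_nth_le [where x = "P $ i" and i = i]
    by (simp add: diag r_def norm_power)
  then have "r \<le> 1"
    by (auto simp: power2_eq_square mult_le_cancel_left2)
  then show ?thesis
    by (simp add: diag r_def power_le_one)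
qed

lemma partial_isometry_trace_le:
  fixes U :: "complex ^ 'm ^ 'm"
  assumes pi: "partial_isometry U"
  shows "Re (trace (adjointM U ** U)) \<le> real CARD('m)"
proof -
  let ?P = "adjointM U ** U"
  have "adjointM ?P = ?P"
    by (simp add: adjointM_mult)
  moreover have "?P ** ?P = ?P"
    using pi unfolding partial_isometry_def by (metis matrix_mul_assoc)
  ultimately have "Re (?P $ i $ i) \<le> 1" for i
    by (rule hermitian_idempotent_diag_le_1)
  then have "(\<Sum>i\<in>UNIV. Re (?P $ i $ i)) \<le> (\<Sum>i\<in>(UNIV :: 'm set). 1)"
    by (intro sum_mono)
  then show ?thesis
    by (simp add: trace_def Re_sum)
qed

definition agrees_on_ker_perp :: "complex ^ 'm ^ 'k \<Rightarrow> complex ^ 'm ^ 'k \<Rightarrow> bool" where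
  "agrees_on_ker_perp W U \<longleftrightarrow>
     (\<forall>\<xi>. (\<forall>\<eta>. U *v \<eta> = 0 \<longrightarrow> cinner \<eta> \<xi> = 0) \<longrightarrow> W *v \<xi> = U *v \<xi>)"

lemma agrees_on_ker_perp_trans:
  assumes "agrees_on_ker_perp W V" and "agrees_on_ker_perp V U"
    and "\<And>\<eta>. V *v \<eta> = 0 \<Longrightarrow> U *v \<eta> = 0"
  shows "agrees_on_ker_perp W U"
  using assms unfolding agrees_on_ker_perp_def by metis

definition sharp_extension :: "'n::finite cmat2 \<Rightarrow> 'n cvec2 \<Rightarrow> 'n cvec2 \<Rightarrow> 'n cmat2" where
  "sharp_extension U e f = U + outer f e + outer (Jconj f) (Jconj e)"

lemma adjointM_sharp_extension:
  assumes "adjointM U = sharp U"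
  shows "adjointM (sharp_extension U e f) = sharp (sharp_extension U e f)"
  using assms by (simp add: sharp_extension_def sharp_outer)

lemma sharp_extension_mulv:
  "sharp_extension U e f *v x = U *v x + cinner e x *s f + cinner (Jconj e) x *s Jconj f"
  by (simp add: sharp_extension_def matrix_vector_mult_add_rdistrib outer_mulv)

context
  fixes U :: "'n::finite cmat2" and e f :: "'n cvec2"
  assumes sh: "adjointM U = sharp U"
    and e: "U *v e = 0" "cinner e e = 1"
    and f: "adjointM U *v f = 0" "cinner f f = 1"
begin

lemma Jconj_in_kernels: "U *v Jconj e = 0" "adjointM U *v Jconj f = 0"
proof -
  have "U = sharp (adjointM U)"
    by (metis adjointM_adjointM adjointM_sharp sh)
  then show "U *v Jconj e = 0"
    by (metis sharp_mulv_Jconj adjointM_adjointM e(1) Jconj_zero)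
  show "adjointM U *v Jconj f = 0"
    by (simp add: sh sharp_mulv_Jconj f(1) [unfolded sh])
qed

lemma initial_projection_sharp_extension:
  "adjointM (sharp_extension U e f) ** sharp_extension U e f
     = adjointM U ** U + outer e e + outer (Jconj e) (Jconj e)"
  by (simp add: sharp_extension_def matrix_add_ldistrib matrix_add_rdistrib matrix_mult_outer
      outer_matrix_mult outer_mult_outer outer_mulv matrix_vector_mult_add_rdistrib
      Jconj_in_kernels f cinner_Jconj_Jconj cinner_Jconj_self)

lemma partial_isometry_sharp_extension:
  assumes pi: "partial_isometry U"
  shows "partial_isometry (sharp_extension U e f)"
proof -
  let ?U' = "sharp_extension U e f"
  have "outer f e ** (adjointM U ** U) = 0" "outer (Jconj f) (Jconj e) ** (adjointM U ** U) = 0"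
    by (simp_all add: outer_matrix_mult adjointM_mult matrix_vector_mul_assoc [symmetric]
        e Jconj_in_kernels)
  moreover have "U ** (adjointM U ** U) = U"
    using pi by (simp add: partial_isometry_def matrix_mul_assoc)
  ultimately have "?U' ** (adjointM ?U' ** ?U') = ?U'"
    unfolding initial_projection_sharp_extension
    by (simp add: sharp_extension_def matrix_add_ldistrib matrix_add_rdistrib matrix_mult_outer
        outer_mult_outer outer_mulv matrix_vector_mult_add_rdistrib e Jconj_in_kernels
        cinner_Jconj_Jconj cinner_Jconj_self)
  then show ?thesis
    by (simp add: partial_isometry_def matrix_mul_assoc)
qed

lemma trace_sharp_extension:
  "Re (trace (adjointM (sharp_extension U e f) ** sharp_extension U e f))
     = Re (trace (adjointM U ** U)) + 2"
  by (simp add: initial_projection_sharp_extension trace_add cinner_Jconj_Jconj e)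

lemma kernel_sharp_extension:
  assumes ker: "sharp_extension U e f *v \<eta> = 0"
  shows "U *v \<eta> = 0"
proof -
  have "cinner e \<eta> = cinner f (sharp_extension U e f *v \<eta>)"
    by (simp add: sharp_extension_mulv cinner_mulv_right f cinner_Jconj_self)
  then have "cinner e \<eta> = 0"
    using ker by simp
  have "cinner (Jconj e) \<eta> = cinner (Jconj f) (sharp_extension U e f *v \<eta>)"
    by (simp add: sharp_extension_mulv cinner_mulv_right Jconj_in_kernels cinner_Jconj_self
        cinner_Jconj_Jconj f)
  then have "cinner (Jconj e) \<eta> = 0"
    using ker by simp
  show ?thesis
    using ker \<open>cinner e \<eta> = 0\<close> \<open>cinner (Jconj e) \<eta> = 0\<close>
    by (simp add: sharp_extension_mulv)
qed

lemma sharp_extension_agrees_on_ker_perp: "agrees_on_ker_perp (sharp_extension U e f) U"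
  unfolding agrees_on_ker_perp_def by (simp add: sharp_extension_mulv e Jconj_in_kernels)

end

lemma sharp_partial_isometry_extends_to_symplectic_unitary:
  fixes U :: "'n::finite cmat2"
  assumes "partial_isometry U" and "adjointM U = sharp U"
    and "real CARD('n + 'n) < Re (trace (adjointM U ** U)) + 2 * real k"
  shows "\<exists>W. symplectic_unitary W \<and> agrees_on_ker_perp W U"
  using assms
proof (induction k arbitrary: U)
  case 0
  then show ?case
    using partial_isometry_trace_le [of U] by simp
next
  case (Suc k)
  note pi = \<open>partial_isometry U\<close> and sh = \<open>adjointM U = sharp U\<close>
  show ?case
  proof (cases "adjointM U ** U = mat 1")
    case True
    then show ?thesis
      using sharp_unitary_imp_symplectic_unitary [OF sh]
      by (auto simp: agrees_on_ker_perp_def)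
  next
    case False
    obtain e where e: "U *v e = 0" "cinner e e = 1"
      using partial_isometry_kernel_unit_vector [OF pi False] .
    have "adjointM (adjointM U) ** adjointM U \<noteq> mat 1"
      using False matrix_left_right_inverse by auto
    then obtain f where f: "adjointM U *v f = 0" "cinner f f = 1"
      using partial_isometry_kernel_unit_vector [OF partial_isometry_adjointM [OF pi]] by blast
    let ?U' = "sharp_extension U e f"
    have "\<exists>W. symplectic_unitary W \<and> agrees_on_ker_perp W ?U'"
      using Suc partial_isometry_sharp_extension [OF sh e f pi]
        adjointM_sharp_extension [OF sh] trace_sharp_extension [OF sh e f]
      by simp
    then show ?thesis
      using agrees_on_ker_perp_trans sharp_extension_agrees_on_ker_perp [OF sh e f]
        kernel_sharp_extension [OF sh e f] by blast
  qed
qed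

theorem mainTheorem18:
  fixes U :: "'n::finite cmat2"
  assumes "partial_isometry U"
    and "adjointM U = sharp U"
  shows "\<exists>W :: 'n cmat2. symplectic_unitary W \<and>
           (\<forall>\<xi> :: 'n cvec2. (\<forall>\<eta>. U *v \<eta> = 0 \<longrightarrow> cinner \<eta> \<xi> = 0) \<longrightarrow> W *v \<xi> = U *v \<xi>)"
proof -
  obtain k :: nat where "real CARD('n + 'n) - Re (trace (adjointM U ** U)) < real k"
    using reals_Archimedean2 by blast
  then have "real CARD('n + 'n) < Re (trace (adjointM U ** U)) + 2 * real k"
    by linarith
  then show ?thesis
    using sharp_partial_isometry_extends_to_symplectic_unitary assms
    unfolding agrees_on_ker_perp_def by blast
qed

end
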